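(* Let $\mathcal{A}$ be an associative algebra over $\mathbb{R}$ that is finite-dimensional as a real vector space, equipped with a symmetric bilinear form $\langle\cdot,\cdot\rangle:\mathcal{A}\times\mathcal{A}\to\mathbb{R}$ satisfying $\langle a,a\rangle\ge0$ for all $a$ (possibly degenerate), and write $\|a\|^2=\langle a,a\rangle$. Let $\mu$ be a Borel probability measure on $\mathcal{A}$ such that $\mathbf{E}\,x=\int_{\mathcal{A}}x\,d\mu=0$, and such that for every non-commutative polynomial $p(x_1,\dots,x_n)=\sum_{1\le i_1,\dots,i_n\le n}\gamma_{i_1\dots i_n}x_{i_1}\cdots x_{i_n}$ with real coefficients, $\mathbf{E}\langle p(x_1,\dots,x_n),p(x_1,\dots,x_n)\rangle<+\infty$ when $x_1,\dots,x_n$ are sampled independently from $\mu$. Define $$c(n,\mu)=\mathbf{E}\|Z\|^2,\qquad Z=\frac1{n!}\sum_{\sigma\in S_n}Y_{\sigma(1)}\cdots Y_{\sigma(n)},$$ where $Y_1,\dots,Y_n$ are sampled independently from $\mu$. Given a real $n\times n$ matrix $A=(a_{ij})$ with $a_{ij}\ge0$, let $B=(b_{ij})$ be the random $n\times n$ matrix over $\mathcal{A}$ with $b_{ij}=\sqrt{a_{ij}}\,X_{ij}$, where the $X_{ij}$ are sampled independently from $\mu$. Then $$\mathbf{E}\|\operatorname{sdet}B\|^2=c(n,\mu)\operatorname{per}A.$$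
   Context: $S_n$ is the symmetric group on $\{1,\dots,n\}$. The permanent is $\operatorname{per}A=\sum_{\sigma\in S_n}\prod_{i=1}^n a_{i\sigma(i)}$. For an $n\times n$ matrix $B=(b_{ij})$ with entries in an associative algebra $\mathcal{A}$, the symmetrized determinant is $\operatorname{sdet}B=\frac1{n!}\sum_{(\sigma,\tau)\in S_n\times S_n}(\operatorname{sgn}\sigma)(\operatorname{sgn}\tau)\,b_{\sigma(1)\tau(1)}b_{\sigma(2)\tau(2)}\cdots b_{\sigma(n)\tau(n)}\in\mathcal{A}$. *)

theory Defs
  imports "HOL-Analysis.Analysis" "HOL-Probability.Probability" "HOL-Combinatorics.Permutations"
begin

text \<open>The value on the empty
  list is an arbitrary convention and is never used (n >= 1 below).\<close>
fun mprod :: "'a::semigroup_mult list \<Rightarrow> 'a::semigroup_mult" where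
  "mprod [] = undefined"
| "mprod [x] = x"
| "mprod (x # y # xs) = x * mprod (y # xs)"

definition per :: "nat \<Rightarrow> (nat \<Rightarrow> nat \<Rightarrow> real) \<Rightarrow> real" where
  "per n A = (\<Sum>\<sigma>\<in>{\<sigma>. \<sigma> permutes {..<n}}. \<Prod>i<n. A i (\<sigma> i))"

definition sdet :: "nat \<Rightarrow> (nat \<Rightarrow> nat \<Rightarrow> 'a::real_algebra) \<Rightarrow> 'a" where
  "sdet n b = (1 / fact n) *\<^sub>R
     (\<Sum>\<sigma>\<in>{\<sigma>. \<sigma> permutes {..<n}}. \<Sum>\<tau>\<in>{\<tau>. \<tau> permutes {..<n}}.
        real_of_int (sign \<sigma> * sign \<tau>) *\<^sub>R mprod (map (\<lambda>i. b (\<sigma> i) (\<tau> i)) [0..<n]))"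

definition ncpoly :: "nat \<Rightarrow> ((nat \<Rightarrow> nat) \<Rightarrow> real) \<Rightarrow> (nat \<Rightarrow> 'a::real_algebra) \<Rightarrow> 'a" where
  "ncpoly n \<gamma> x = (\<Sum>w\<in>PiE {..<n} (\<lambda>_. {..<n}). \<gamma> w *\<^sub>R mprod (map (\<lambda>k. x (w k)) [0..<n]))"

definition symZ :: "nat \<Rightarrow> (nat \<Rightarrow> 'a::real_algebra) \<Rightarrow> 'a" where
  "symZ n Y = (1 / fact n) *\<^sub>R (\<Sum>\<sigma>\<in>{\<sigma>. \<sigma> permutes {..<n}}. mprod (map (\<lambda>i. Y (\<sigma> i)) [0..<n]))"

definition cnmu :: "('a::{real_algebra, euclidean_space} \<Rightarrow> 'a \<Rightarrow> real) \<Rightarrow> nat \<Rightarrow> 'a measure \<Rightarrow> real" where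
  "cnmu Bf n \<mu> = (\<integral>Y. Bf (symZ n Y) (symZ n Y) \<partial>(PiM {..<n} (\<lambda>_. \<mu>)))"

end

theory Submission
  imports Defs
begin

text \<open>Reindexing the double sum in \<open>sdet\<close> by \<open>\<tau> = \<pi> \<circ> \<sigma>\<close> gives
  \<open>sdet B = \<Sum>\<^sub>\<pi> sign \<pi> (\<Prod>\<^sub>r sqrt (a r (\<pi> r))) Z\<^sub>\<pi>\<close>, where \<open>Z\<^sub>\<pi>\<close> is the symmetrised
  product of the entries \<open>X (r, \<pi> r)\<close> on the transversal of \<open>\<pi>\<close>. These entries are independent
  with law \<open>\<mu>\<close>, so \<open>E \<langle>Z\<^sub>\<pi>, Z\<^sub>\<pi>\<rangle> = c(n, \<mu>)\<close>. For \<open>\<pi> \<noteq> \<pi>'\<close> some entry \<open>X (r, \<pi> r)\<close>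
  occurs in \<open>Z\<^sub>\<pi>\<close>, linearly, but not in \<open>Z\<^sub>\<pi>'\<close>; integrating it out first shows
  \<open>E \<langle>Z\<^sub>\<pi>, Z\<^sub>\<pi>'\<rangle> = 0\<close> because \<open>\<mu>\<close> is centred. Hence the \<open>Z\<^sub>\<pi>\<close> are orthogonal and
  \<open>E \<parallel>sdet B\<parallel>\<^sup>2 = c(n, \<mu>) \<Sum>\<^sub>\<pi> \<Prod>\<^sub>r a r (\<pi> r) = c(n, \<mu>) per A\<close>. Integrability comes from
  the moment hypothesis applied to the coefficients of \<open>Z\<close>, the cross terms being dominated via
  \<open>\<bar>\<langle>a, b\<rangle>\<bar> \<le> \<langle>a, a\<rangle> + \<langle>b, b\<rangle>\<close>.\<close>

lemma mprod_scaleR: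
  fixes f :: "'i \<Rightarrow> 'a::real_algebra"
  shows "xs \<noteq> [] \<Longrightarrow> mprod (map (\<lambda>i. c i *\<^sub>R f i) xs) = prod_list (map c xs) *\<^sub>R mprod (map f xs)"
  by (induction xs rule: induct_list012) auto

lemma bilinear_times: "bilinear ((*) :: 'a::real_algebra \<Rightarrow> 'a \<Rightarrow> 'a)"
  by (auto simp: bilinear_def intro!: linearI simp: distrib_left distrib_right)

lemma linear_mprod_fun_upd:
  fixes Y :: "'i \<Rightarrow> 'a::real_algebra"
  assumes "r \<in> set ks" "distinct ks"
  shows "linear (\<lambda>y. mprod (map (Y(r := y)) ks))"
  using assms
proof (induction ks rule: induct_list012)
  case (3 k k' ks)
  have linear_times_right: "linear (\<lambda>y. y * c)" for c :: 'a
    using bilinear_times unfolding bilinear_def by blast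
  have linear_times_left: "linear (\<lambda>y. c * g y)" if "linear g" for c :: 'a and g :: "'a \<Rightarrow> 'a"
    using bilinear_times that by (auto simp: bilinear_def intro: linear_compose[unfolded o_def])
  have split: "mprod (map (Y(r := y)) (k # k' # ks)) = (Y(r := y)) k * mprod (map (Y(r := y)) (k' # ks))"
    for y by (simp only: list.map mprod.simps)
  show ?case
  proof (cases "k = r")
    case True
    with "3.prems" have r_notin: "r \<notin> set (k' # ks)" by auto
    have "mprod (map (Y(r := y)) (k # k' # ks)) = y * mprod (map Y (k' # ks))" for y
      unfolding split map_fun_upd[OF r_notin] using True by simp
    then show ?thesis by (simp only: linear_times_right)
  next
    case False
    with "3.prems" have "linear (\<lambda>y. mprod (map (Y(r := y)) (k' # ks)))" by (intro "3.IH") auto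
    then show ?thesis unfolding split fun_upd_other[OF False] by (rule linear_times_left)
  qed
qed (auto simp: linear_id[unfolded id_def])

lemma permutes_lessThan_upt:
  assumes "\<sigma> permutes {..<n}"
  shows "set (map \<sigma> [0..<n]) = {..<n}" "distinct (map \<sigma> [0..<n])"
  using permutes_image[OF assms] permutes_inj[OF assms]
  by (auto simp: atLeast0LessThan distinct_map inj_on_def)

lemma linear_symZ_fun_upd:
  fixes Y :: "nat \<Rightarrow> 'a::real_algebra"
  assumes "r < n"
  shows "linear (\<lambda>y. symZ n (Y(r := y)))"
  unfolding symZ_def
proof (intro linear_compose_scale_right linear_compose_sum ballI)
  fix \<sigma> assume "\<sigma> \<in> {\<sigma>. \<sigma> permutes {..<n}}"
  with assms have "linear (\<lambda>y. mprod (map (Y(r := y)) (map \<sigma> [0..<n])))"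
    using permutes_lessThan_upt[of \<sigma> n] by (intro linear_mprod_fun_upd) auto
  then show "linear (\<lambda>y. mprod (map (\<lambda>i. (Y(r := y)) (\<sigma> i)) [0..<n]))"
    by (simp only: map_map o_def)
qed

lemma symZ_cong:
  assumes "\<And>r. r < n \<Longrightarrow> Y r = Y' r"
  shows "symZ n Y = symZ n Y'"
proof -
  have "map (\<lambda>i. Y (\<sigma> i)) [0..<n] = map (\<lambda>i. Y' (\<sigma> i)) [0..<n]" if "\<sigma> permutes {..<n}" for \<sigma>
    using assms permutes_in_image[OF that] by simp
  then show ?thesis unfolding symZ_def by (metis (mono_tags) mem_Collect_eq sum.cong)
qed

lemma sdet_scaleR_entries:
  fixes X :: "nat \<Rightarrow> nat \<Rightarrow> 'a::real_algebra"
  assumes "n \<ge> 1"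
  shows "sdet n (\<lambda>i j. s i j *\<^sub>R X i j) =
    (\<Sum>\<pi>\<in>{\<pi>. \<pi> permutes {..<n}}.
       (of_int (sign \<pi>) * (\<Prod>r<n. s r (\<pi> r))) *\<^sub>R symZ n (\<lambda>r. X r (\<pi> r)))"
proof -
  let ?P = "{\<pi>. \<pi> permutes {..<n}}"
  let ?c = "\<lambda>\<pi>. of_int (sign \<pi>) * (\<Prod>r<n. s r (\<pi> r))"
  let ?m = "\<lambda>\<sigma> \<tau>. mprod (map (\<lambda>i. X (\<sigma> i) (\<tau> i)) [0..<n])"
  have prod_list_upt: "prod_list (map c [0..<n]) = (\<Prod>i<n. c i)" for c :: "nat \<Rightarrow> real"
    using prod.distinct_set_conv_list[of "[0..<n]" c] by (simp add: atLeast0LessThan)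
  have scale: "mprod (map (\<lambda>i. s (\<sigma> i) (\<tau> i) *\<^sub>R X (\<sigma> i) (\<tau> i)) [0..<n])
      = (\<Prod>i<n. s (\<sigma> i) (\<tau> i)) *\<^sub>R ?m \<sigma> \<tau>" for \<sigma> \<tau>
    using assms mprod_scaleR[of "[0..<n]" "\<lambda>i. s (\<sigma> i) (\<tau> i)" "\<lambda>i. X (\<sigma> i) (\<tau> i)"]
    by (simp add: prod_list_upt)
  have coeff: "of_int (sign \<sigma> * sign (\<pi> \<circ> \<sigma>)) * (\<Prod>i<n. s (\<sigma> i) ((\<pi> \<circ> \<sigma>) i)) = ?c \<pi>"
    if "\<sigma> \<in> ?P" "\<pi> \<in> ?P" for \<sigma> \<pi>
  proof -
    have "permutation \<sigma>" "permutation \<pi>"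
      using that by (auto simp: permutation_permutes)
    then have "sign \<sigma> * sign (\<pi> \<circ> \<sigma>) = sign \<pi> * (sign \<sigma> * sign \<sigma>)"
      by (simp add: sign_compose mult_ac)
    moreover have "(\<Prod>i<n. s (\<sigma> i) (\<pi> (\<sigma> i))) = (\<Prod>r<n. s r (\<pi> r))"
      using prod.permute[of \<sigma> "{..<n}" "\<lambda>r. s r (\<pi> r)"] that by (simp add: o_def)
    ultimately show ?thesis by (simp add: sign_idempotent)
  qed
  let ?F = "\<lambda>\<sigma> \<tau>. (of_int (sign \<sigma> * sign \<tau>) * (\<Prod>i<n. s (\<sigma> i) (\<tau> i))) *\<^sub>R ?m \<sigma> \<tau>"
  have reindex: "(\<Sum>\<tau>\<in>?P. ?F \<sigma> \<tau>) = (\<Sum>\<pi>\<in>?P. ?c \<pi> *\<^sub>R ?m \<sigma> (\<pi> \<circ> \<sigma>))"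
    if "\<sigma> \<in> ?P" for \<sigma>
  proof -
    have "(\<Sum>\<tau>\<in>?P. ?F \<sigma> \<tau>) = (\<Sum>\<pi>\<in>?P. ?F \<sigma> (\<pi> \<circ> \<sigma>))"
      using that by (intro sum_permutations_compose_right) simp
    also have "\<dots> = (\<Sum>\<pi>\<in>?P. ?c \<pi> *\<^sub>R ?m \<sigma> (\<pi> \<circ> \<sigma>))"
      by (intro sum.cong refl) (simp only: coeff[OF that])
    finally show ?thesis .
  qed
  have "sdet n (\<lambda>i j. s i j *\<^sub>R X i j) = (1 / fact n) *\<^sub>R (\<Sum>\<sigma>\<in>?P. \<Sum>\<tau>\<in>?P.
      (of_int (sign \<sigma> * sign \<tau>) * (\<Prod>i<n. s (\<sigma> i) (\<tau> i))) *\<^sub>R ?m \<sigma> \<tau>)"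
    unfolding sdet_def scale scaleR_scaleR ..
  also have "\<dots> = (1 / fact n) *\<^sub>R (\<Sum>\<sigma>\<in>?P. \<Sum>\<pi>\<in>?P. ?c \<pi> *\<^sub>R ?m \<sigma> (\<pi> \<circ> \<sigma>))"
    by (rule arg_cong[where f = "\<lambda>x. _ *\<^sub>R x"], rule sum.cong[OF refl], erule reindex)
  also have "\<dots> = (1 / fact n) *\<^sub>R (\<Sum>\<pi>\<in>?P. \<Sum>\<sigma>\<in>?P. ?c \<pi> *\<^sub>R ?m \<sigma> (\<pi> \<circ> \<sigma>))"
    by (subst sum.swap) (rule refl)
  also have "\<dots> = (\<Sum>\<pi>\<in>?P. ?c \<pi> *\<^sub>R symZ n (\<lambda>r. X r (\<pi> r)))"
    unfolding symZ_def scaleR_sum_right scaleR_scaleR o_def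
    by (intro sum.cong refl) (simp add: mult.commute)
  finally show ?thesis .
qed

text \<open>\<open>ncpoly\<close> sums over extensional words, hence the restriction of the permutations.\<close>

lemma symZ_eq_ncpoly:
  "symZ n Y = ncpoly n (\<lambda>w. if w \<in> (\<lambda>\<sigma>. restrict \<sigma> {..<n}) ` {\<sigma>. \<sigma> permutes {..<n}}
                             then 1 / fact n else 0) Y"
proof -
  let ?P = "{\<sigma>. \<sigma> permutes {..<n}}"
  let ?R = "(\<lambda>\<sigma>. restrict \<sigma> {..<n}) ` ?P"
  let ?m = "\<lambda>w. mprod (map (\<lambda>k. Y (w k)) [0..<n])"
  have inj: "inj_on (\<lambda>\<sigma>. restrict \<sigma> {..<n}) ?P"
  proof (rule inj_onI, rule ext)
    fix \<sigma> \<tau> x assume perms: "\<sigma> \<in> ?P" "\<tau> \<in> ?P"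
      and eq: "restrict \<sigma> {..<n} = restrict \<tau> {..<n}"
    show "\<sigma> x = \<tau> x"
      using fun_cong[OF eq, of x] perms by (cases "x < n") (auto simp: permutes_not_in)
  qed
  have "?R \<subseteq> PiE {..<n} (\<lambda>_. {..<n})"
    using permutes_in_image by fastforce
  then have "ncpoly n (\<lambda>w. if w \<in> ?R then 1 / fact n else 0) Y = (\<Sum>w\<in>?R. (1 / fact n) *\<^sub>R ?m w)"
    unfolding ncpoly_def by (simp add: if_distrib[of "\<lambda>c. c *\<^sub>R _"] sum.If_cases finite_PiE Int_absorb1)
  also have "\<dots> = (\<Sum>\<sigma>\<in>?P. (1 / fact n) *\<^sub>R ?m (restrict \<sigma> {..<n}))"
    using inj by (rule sum.reindex[unfolded o_def])
  also have "\<dots> = symZ n Y"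
  proof -
    have "map (\<lambda>k. Y (restrict \<sigma> {..<n} k)) [0..<n] = map (\<lambda>i. Y (\<sigma> i)) [0..<n]" for \<sigma>
      by simp
    then show ?thesis unfolding symZ_def scaleR_sum_right by (simp only:)
  qed
  finally show ?thesis ..
qed

lemma borel_measurable_bilinear:
  fixes h :: "'a::euclidean_space \<Rightarrow> 'b::euclidean_space \<Rightarrow> 'c::euclidean_space"
  assumes "bilinear h" "f \<in> borel_measurable M" "g \<in> borel_measurable M"
  shows "(\<lambda>x. h (f x) (g x)) \<in> borel_measurable M"
proof -
  have "bounded_bilinear h"
    using assms(1) bilinear_conv_bounded_bilinear by blast
  then have "continuous_on UNIV (\<lambda>p. h (fst p) (snd p))"
    by (rule bounded_bilinear.continuous_on) (auto intro: continuous_on_fst continuous_on_snd continuous_on_id)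
  with assms(2,3) show ?thesis by (rule borel_measurable_continuous_Pair)
qed

lemma borel_measurable_mprod:
  fixes f :: "'x \<Rightarrow> 'i \<Rightarrow> 'a::{real_algebra, euclidean_space}"
  assumes "\<And>k. k \<in> set ks \<Longrightarrow> (\<lambda>x. f x k) \<in> borel_measurable M"
  shows "(\<lambda>x. mprod (map (f x) ks)) \<in> borel_measurable M"
  using assms
proof (induction ks rule: induct_list012)
  case (3 k k' ks)
  have "(\<lambda>x. f x k) \<in> borel_measurable M"
    using "3.prems" by simp
  moreover have "(\<lambda>x. mprod (map (f x) (k' # ks))) \<in> borel_measurable M"
    by (rule "3.IH"(2)) (use "3.prems" in simp)
  ultimately have "(\<lambda>x. f x k * mprod (map (f x) (k' # ks))) \<in> borel_measurable M"
    by (rule borel_measurable_bilinear[OF bilinear_times])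
  then show ?case by simp
qed auto

lemma borel_measurable_symZ:
  fixes Y :: "'x \<Rightarrow> nat \<Rightarrow> 'a::{real_algebra, euclidean_space}"
  assumes "\<And>r. r < n \<Longrightarrow> (\<lambda>x. Y x r) \<in> borel_measurable M"
  shows "(\<lambda>x. symZ n (Y x)) \<in> borel_measurable M"
  unfolding symZ_def
proof (intro borel_measurable_scaleR borel_measurable_const borel_measurable_sum)
  fix \<sigma> assume "\<sigma> \<in> {\<sigma>. \<sigma> permutes {..<n}}"
  then have "(\<lambda>x. Y x (\<sigma> i)) \<in> borel_measurable M" if "i < n" for i
    using assms permutes_in_image[of \<sigma> "{..<n}" i] that by simp
  then show "(\<lambda>x. mprod (map (\<lambda>i. Y x (\<sigma> i)) [0..<n])) \<in> borel_measurable M"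
    by (intro borel_measurable_mprod) simp
qed

lemma bilinear_abs_le_diag:
  fixes Bf :: "'a::real_vector \<Rightarrow> 'a \<Rightarrow> real"
  assumes "bilinear Bf" "\<And>a b. Bf a b = Bf b a" "\<And>a. Bf a a \<ge> 0"
  shows "\<bar>Bf a b\<bar> \<le> Bf a a + Bf b b"
proof -
  have "Bf (a + b) (a + b) = Bf a a + 2 * Bf a b + Bf b b"
       "Bf (a - b) (a - b) = Bf a a - 2 * Bf a b + Bf b b"
    using assms(2)[of b a]
    by (simp_all add: bilinear_ladd[OF assms(1)] bilinear_radd[OF assms(1)]
        bilinear_lsub[OF assms(1)] bilinear_rsub[OF assms(1)])
  then show ?thesis
    using assms(3)[of "a + b"] assms(3)[of "a - b"] by linarith
qed

lemma integral_PiM_linear_centered_eq_0: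
  fixes F :: "('i \<Rightarrow> 'a::euclidean_space) \<Rightarrow> 'b::{banach, second_countable_topology}"
  assumes "prob_space \<mu>" "finite I" "e \<in> I"
    and "integrable (PiM I (\<lambda>_. \<mu>)) F"
    and "integrable \<mu> (\<lambda>y. y)" "(\<integral>y. y \<partial>\<mu>) = 0"
    and "\<And>x. linear (\<lambda>y. F (x(e := y)))"
  shows "integral\<^sup>L (PiM I (\<lambda>_. \<mu>)) F = 0"
proof -
  interpret product_sigma_finite "\<lambda>_. \<mu>"
    using assms(1) by (simp add: product_sigma_finite_def prob_space_imp_sigma_finite)
  have I: "I = insert e (I - {e})"
    using assms(3) by blast
  have "(\<integral>y. F (x(e := y)) \<partial>\<mu>) = F (x(e := \<integral>y. y \<partial>\<mu>))" for x
    using assms(5,7) by (intro integral_bounded_linear linear_conv_bounded_linear[THEN iffD1])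
  also have "F (x(e := \<integral>y. y \<partial>\<mu>)) = 0" for x
    unfolding assms(6) using assms(7) by (rule linear_0)
  finally have "integral\<^sup>L (PiM (insert e (I - {e})) (\<lambda>_. \<mu>)) F = 0"
    using assms(2,4) I by (subst product_integral_insert) auto
  with I show ?thesis by simp
qed

lemma integral_PiM_reindex:
  fixes g :: "('j \<Rightarrow> 'a) \<Rightarrow> 'b::{banach, second_countable_topology}"
  assumes "prob_space \<mu>" "inj_on t J" "t \<in> J \<rightarrow> I" "g \<in> borel_measurable (PiM J (\<lambda>_. \<mu>))"
  shows "integrable (PiM I (\<lambda>_. \<mu>)) (\<lambda>X. g (\<lambda>j\<in>J. X (t j))) \<longleftrightarrow> integrable (PiM J (\<lambda>_. \<mu>)) g"
    and "(\<integral>X. g (\<lambda>j\<in>J. X (t j)) \<partial>PiM I (\<lambda>_. \<mu>)) = integral\<^sup>L (PiM J (\<lambda>_. \<mu>)) g"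
proof -
  have meas: "(\<lambda>X. \<lambda>j\<in>J. X (t j)) \<in> measurable (PiM I (\<lambda>_. \<mu>)) (PiM J (\<lambda>_. \<mu>))"
    using assms(3) by (intro measurable_restrict measurable_component_singleton) auto
  have distr: "distr (PiM I (\<lambda>_. \<mu>)) (PiM J (\<lambda>_. \<mu>)) (\<lambda>X. \<lambda>j\<in>J. X (t j)) = PiM J (\<lambda>_. \<mu>)"
    using distr_PiM_reindex[of I "\<lambda>_. \<mu>" t J] assms(1-3) by simp
  show "integrable (PiM I (\<lambda>_. \<mu>)) (\<lambda>X. g (\<lambda>j\<in>J. X (t j))) \<longleftrightarrow> integrable (PiM J (\<lambda>_. \<mu>)) g"
    by (simp only: integrable_distr_eq[OF meas assms(4), symmetric] distr)
  show "(\<integral>X. g (\<lambda>j\<in>J. X (t j)) \<partial>PiM I (\<lambda>_. \<mu>)) = integral\<^sup>L (PiM J (\<lambda>_. \<mu>)) g"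
    by (simp only: integral_distr[OF meas assms(4), symmetric] distr)
qed

lemma integral_bilinear_orthogonal_sum:
  fixes Bf :: "'a::real_vector \<Rightarrow> 'a \<Rightarrow> real"
  assumes "bilinear Bf" "finite S"
    and "\<And>i j. i \<in> S \<Longrightarrow> j \<in> S \<Longrightarrow> integrable M (\<lambda>x. Bf (f i x) (f j x))"
    and "\<And>i j. i \<in> S \<Longrightarrow> j \<in> S \<Longrightarrow> i \<noteq> j \<Longrightarrow> (\<integral>x. Bf (f i x) (f j x) \<partial>M) = 0"
    and "\<And>i. i \<in> S \<Longrightarrow> (\<integral>x. Bf (f i x) (f i x) \<partial>M) = K"
  shows "(\<integral>x. Bf (\<Sum>i\<in>S. c i *\<^sub>R f i x) (\<Sum>i\<in>S. c i *\<^sub>R f i x) \<partial>M) = K * (\<Sum>i\<in>S. (c i)\<^sup>2)"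
proof -
  have "Bf (\<Sum>i\<in>S. c i *\<^sub>R f i x) (\<Sum>i\<in>S. c i *\<^sub>R f i x) = (\<Sum>i\<in>S. \<Sum>j\<in>S. c i * c j * Bf (f i x) (f j x))"
    for x
    unfolding bilinear_sum[OF assms(1)] sum.cartesian_product
    by (auto intro!: sum.cong simp: bilinear_lmul[OF assms(1)] bilinear_rmul[OF assms(1)])
  then have "(\<integral>x. Bf (\<Sum>i\<in>S. c i *\<^sub>R f i x) (\<Sum>i\<in>S. c i *\<^sub>R f i x) \<partial>M)
      = (\<Sum>i\<in>S. \<Sum>j\<in>S. c i * c j * (\<integral>x. Bf (f i x) (f j x) \<partial>M))"
    using assms(3) by (simp add: integrable_sum)
  also have "\<dots> = (\<Sum>i\<in>S. \<Sum>j\<in>S. if i = j then c i * c j * K else 0)"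
    using assms(4,5) by (intro sum.cong refl) auto
  also have "\<dots> = K * (\<Sum>i\<in>S. (c i)\<^sup>2)"
    using assms(2) by (simp add: sum_distrib_left power2_eq_square mult_ac)
  finally show ?thesis .
qed

locale centered_form_measure = prob_space \<mu>
  for \<mu> :: "'a::{real_algebra, euclidean_space} measure" +
  fixes Bf :: "'a \<Rightarrow> 'a \<Rightarrow> real"
  assumes bilinear_Bf: "bilinear Bf"
    and Bf_commute: "\<And>a b. Bf a b = Bf b a"
    and Bf_nonneg: "\<And>a. Bf a a \<ge> 0"
    and sets_eq_borel: "sets \<mu> = sets borel"
    and integrable_id: "integrable \<mu> (\<lambda>x. x)"
    and mean_zero: "(\<integral>x. x \<partial>\<mu>) = 0"
begin

lemma borel_measurable_PiM_component:
  assumes "i \<in> I"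
  shows "(\<lambda>X. X i) \<in> borel_measurable (PiM I (\<lambda>_. \<mu>))"
proof -
  have "(\<lambda>X. X i) \<in> measurable (PiM I (\<lambda>_. \<mu>)) \<mu>"
    using assms by (rule measurable_component_singleton)
  then show ?thesis
    unfolding measurable_cong_sets[OF refl sets_eq_borel] .
qed

lemma borel_measurable_Bf_symZ:
  "(\<lambda>Y. Bf (symZ n Y) (symZ n Y)) \<in> borel_measurable (PiM {..<n} (\<lambda>_. \<mu>))"
  by (intro borel_measurable_bilinear[OF bilinear_Bf] borel_measurable_symZ borel_measurable_PiM_component)
    simp_all

lemma integrable_Bf_symZ:
  assumes "(\<integral>\<^sup>+Y. ennreal (Bf (symZ n Y) (symZ n Y)) \<partial>PiM {..<n} (\<lambda>_. \<mu>)) < \<infinity>"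
  shows "integrable (PiM {..<n} (\<lambda>_. \<mu>)) (\<lambda>Y. Bf (symZ n Y) (symZ n Y))"
  using assms Bf_nonneg by (intro integrableI_bounded borel_measurable_Bf_symZ) simp

lemma borel_measurable_transversal_symZ:
  assumes "\<pi> permutes {..<n}"
  shows "(\<lambda>X. symZ n (\<lambda>r. X (r, \<pi> r))) \<in> borel_measurable (PiM ({..<n} \<times> {..<n}) (\<lambda>_. \<mu>))"
  using permutes_in_image[OF assms] by (intro borel_measurable_symZ borel_measurable_PiM_component) auto

lemma integral_Bf_transversal_symZ_diag:
  assumes "integrable (PiM {..<n} (\<lambda>_. \<mu>)) (\<lambda>Y. Bf (symZ n Y) (symZ n Y))"
    and "\<pi> permutes {..<n}"
  shows "integrable (PiM ({..<n} \<times> {..<n}) (\<lambda>_. \<mu>))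
      (\<lambda>X. Bf (symZ n (\<lambda>r. X (r, \<pi> r))) (symZ n (\<lambda>r. X (r, \<pi> r))))" (is ?integrable)
    and "(\<integral>X. Bf (symZ n (\<lambda>r. X (r, \<pi> r))) (symZ n (\<lambda>r. X (r, \<pi> r)))
      \<partial>PiM ({..<n} \<times> {..<n}) (\<lambda>_. \<mu>)) = cnmu Bf n \<mu>" (is ?integral)
proof -
  have "inj_on (\<lambda>r. (r, \<pi> r)) {..<n}" "(\<lambda>r. (r, \<pi> r)) \<in> {..<n} \<rightarrow> {..<n} \<times> {..<n}"
    using permutes_in_image[OF assms(2)] by (auto simp: inj_on_def)
  note reindex = integral_PiM_reindex[OF prob_space_axioms this borel_measurable_Bf_symZ]
  have restrict: "symZ n (\<lambda>r. X (r, \<pi> r)) = symZ n (\<lambda>r\<in>{..<n}. X (r, \<pi> r))"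
    for X :: "nat \<times> nat \<Rightarrow> 'a"
    by (rule symZ_cong) simp
  show ?integrable
    using reindex(1) assms(1) unfolding restrict by simp
  show ?integral
    using reindex(2) unfolding restrict cnmu_def by simp
qed

lemma integrable_Bf_transversal_symZ:
  assumes "integrable (PiM {..<n} (\<lambda>_. \<mu>)) (\<lambda>Y. Bf (symZ n Y) (symZ n Y))"
    and "\<pi> permutes {..<n}" "\<pi>' permutes {..<n}"
  shows "integrable (PiM ({..<n} \<times> {..<n}) (\<lambda>_. \<mu>))
      (\<lambda>X. Bf (symZ n (\<lambda>r. X (r, \<pi> r))) (symZ n (\<lambda>r. X (r, \<pi>' r))))"
proof (rule Bochner_Integration.integrable_bound)
  show "integrable (PiM ({..<n} \<times> {..<n}) (\<lambda>_. \<mu>)) (\<lambda>X.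
      Bf (symZ n (\<lambda>r. X (r, \<pi> r))) (symZ n (\<lambda>r. X (r, \<pi> r))) +
      Bf (symZ n (\<lambda>r. X (r, \<pi>' r))) (symZ n (\<lambda>r. X (r, \<pi>' r))))"
    by (intro Bochner_Integration.integrable_add integral_Bf_transversal_symZ_diag(1) assms)
  show "(\<lambda>X. Bf (symZ n (\<lambda>r. X (r, \<pi> r))) (symZ n (\<lambda>r. X (r, \<pi>' r))))
      \<in> borel_measurable (PiM ({..<n} \<times> {..<n}) (\<lambda>_. \<mu>))"
    using assms(2,3)
    by (intro borel_measurable_bilinear[OF bilinear_Bf] borel_measurable_transversal_symZ)
qed (use bilinear_abs_le_diag[OF bilinear_Bf Bf_commute Bf_nonneg] Bf_nonneg in \<open>auto intro: AE_I2\<close>)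

lemma integral_Bf_transversal_symZ_orthogonal:
  assumes "integrable (PiM {..<n} (\<lambda>_. \<mu>)) (\<lambda>Y. Bf (symZ n Y) (symZ n Y))"
    and \<pi>: "\<pi> permutes {..<n}" and \<pi>': "\<pi>' permutes {..<n}" and "\<pi> \<noteq> \<pi>'"
  shows "(\<integral>X. Bf (symZ n (\<lambda>r. X (r, \<pi> r))) (symZ n (\<lambda>r. X (r, \<pi>' r)))
      \<partial>PiM ({..<n} \<times> {..<n}) (\<lambda>_. \<mu>)) = 0"
proof -
  txt \<open>The entry \<open>X (r, \<pi> r)\<close> enters the first factor linearly and the second not at all.\<close>
  obtain r where r: "r < n" "\<pi> r \<noteq> \<pi>' r"
    using \<open>\<pi> \<noteq> \<pi>'\<close> permutes_not_in[OF \<pi>] permutes_not_in[OF \<pi>'] by (metis ext lessThan_iff)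
  have linear: "linear (\<lambda>y. Bf (symZ n (\<lambda>r'. (X((r, \<pi> r) := y)) (r', \<pi> r')))
                         (symZ n (\<lambda>r'. (X((r, \<pi> r) := y)) (r', \<pi>' r'))))" for X
  proof -
    have upd: "(\<lambda>r'. (X((r, \<pi> r) := y)) (r', \<pi> r')) = (\<lambda>r'. X (r', \<pi> r'))(r := y)"
         "(\<lambda>r'. (X((r, \<pi> r) := y)) (r', \<pi>' r')) = (\<lambda>r'. X (r', \<pi>' r'))" for y
      using r(2) by (auto simp: fun_eq_iff)
    have "linear ((\<lambda>a. Bf a (symZ n (\<lambda>r'. X (r', \<pi>' r')))) \<circ> (\<lambda>y. symZ n ((\<lambda>r'. X (r', \<pi> r'))(r := y))))"
      using bilinear_Bf unfolding bilinear_def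
      by (intro linear_compose[OF linear_symZ_fun_upd[OF r(1)]]) blast
    then show ?thesis
      by (simp only: upd o_def)
  qed
  have "(r, \<pi> r) \<in> {..<n} \<times> {..<n}"
    using r(1) permutes_in_image[OF \<pi>] by simp
  from integral_PiM_linear_centered_eq_0[OF prob_space_axioms _ this
      integrable_Bf_transversal_symZ[OF assms(1) \<pi> \<pi>'] integrable_id mean_zero linear]
  show ?thesis by simp
qed

end

theorem theorem4p3:
  fixes Bf :: "'a::{real_algebra, euclidean_space} \<Rightarrow> 'a \<Rightarrow> real"
    and \<mu> :: "'a measure"
    and n :: nat
    and A :: "nat \<Rightarrow> nat \<Rightarrow> real"
  assumes bil: "bilinear Bf"
    and sym: "\<And>a b. Bf a b = Bf b a"
    and psd: "\<And>a. Bf a a \<ge> 0"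
    and prob: "prob_space \<mu>"
    and borel: "sets \<mu> = sets borel"
    and mean_int: "integrable \<mu> (\<lambda>x. x)"
    and mean0: "(\<integral>x. x \<partial>\<mu>) = 0"
    and moments: "\<And>\<gamma>. (\<integral>\<^sup>+ x. ennreal (Bf (ncpoly n \<gamma> x) (ncpoly n \<gamma> x))
                        \<partial>(PiM {..<n} (\<lambda>_. \<mu>))) < \<infinity>"
    and n_pos: "n \<ge> 1"
    and A_nonneg: "\<And>i j. i < n \<Longrightarrow> j < n \<Longrightarrow> A i j \<ge> 0"
  shows "(\<integral>X. Bf (sdet n (\<lambda>i j. sqrt (A i j) *\<^sub>R X (i, j)))
                  (sdet n (\<lambda>i j. sqrt (A i j) *\<^sub>R X (i, j)))
            \<partial>(PiM ({..<n} \<times> {..<n}) (\<lambda>_. \<mu>)))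
         = cnmu Bf n \<mu> * per n A"
proof -
  interpret centered_form_measure \<mu> Bf
    by (intro centered_form_measure.intro centered_form_measure_axioms.intro assms)
  let ?P = "{\<pi>. \<pi> permutes {..<n}}"
  let ?c = "\<lambda>\<pi>. of_int (sign \<pi>) * (\<Prod>r<n. sqrt (A r (\<pi> r)))"
  have symZ_sq: "integrable (PiM {..<n} (\<lambda>_. \<mu>)) (\<lambda>Y. Bf (symZ n Y) (symZ n Y))"
    by (rule integrable_Bf_symZ) (use moments in \<open>simp only: symZ_eq_ncpoly\<close>)
  have coeff_sq: "(?c \<pi>)\<^sup>2 = (\<Prod>r<n. A r (\<pi> r))" if "\<pi> \<in> ?P" for \<pi>
    using that A_nonneg permutes_in_image[of \<pi> "{..<n}"]
    by (auto simp: power_mult_distrib sign_def prod_power_distrib intro!: prod.cong)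
  have decomp: "sdet n (\<lambda>i j. sqrt (A i j) *\<^sub>R X (i, j)) = (\<Sum>\<pi>\<in>?P. ?c \<pi> *\<^sub>R symZ n (\<lambda>r. X (r, \<pi> r)))"
    for X :: "nat \<times> nat \<Rightarrow> 'a"
    using sdet_scaleR_entries[OF n_pos, of "\<lambda>i j. sqrt (A i j)" "\<lambda>i j. X (i, j)"] by simp
  have "(\<integral>X. Bf (sdet n (\<lambda>i j. sqrt (A i j) *\<^sub>R X (i, j))) (sdet n (\<lambda>i j. sqrt (A i j) *\<^sub>R X (i, j)))
      \<partial>PiM ({..<n} \<times> {..<n}) (\<lambda>_. \<mu>)) = cnmu Bf n \<mu> * (\<Sum>\<pi>\<in>?P. (?c \<pi>)\<^sup>2)"
    unfolding decomp using symZ_sq by (intro integral_bilinear_orthogonal_sum bil finite_permutations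
        integrable_Bf_transversal_symZ integral_Bf_transversal_symZ_orthogonal integral_Bf_transversal_symZ_diag(2);
        simp)
  also have "\<dots> = cnmu Bf n \<mu> * per n A"
    unfolding per_def using coeff_sq by (intro arg_cong[where f = "\<lambda>x. _ * x"] sum.cong) auto
  finally show ?thesis .
qed

end
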